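(* Let $a,b,c\in\mathbb{C}$ with $a\neq0$, $\Re(b)>0$, $\Re(b+a+c)>0$, $\Re(b+a-c)>0$, $\Re(b-a+c)>0$, $\Re(b-a-c)>0$, and $\frac{a+c}{b},\frac{a-c}{b}\notin\{\pm1,\pm3,\pm5,\dots\}$. Fix a square root $\sqrt{a^2-c^2}$, put $\mu=\frac{\sqrt{a^2-c^2}}{2b}$, $\tau_1=\frac12-\frac{a+c}{2b}$, $\tau_2=\frac12-\frac{a-c}{2b}$, $\tau_3=\frac12+\frac{a+c}{2b}$, $\tau_4=\frac12+\frac{a-c}{2b}$, and $Q=(b-a-c)(b+a+c)(b-a+c)(b+a-c)$. Assume $\frac12\pm\mu\notin\mathbb{Z}_0^-$ and $1+\tau_j\notin\mathbb{Z}_0^-$ ($j=1,\dots,4$). Then $$ {}_7F_6\!\left(\begin{matrix}1,\ \frac32-\mu,\ \frac32+\mu,\ \tau_1,\ \tau_2,\ \tau_3,\ \tau_4\\ \frac12-\mu,\ \frac12+\mu,\ 1+\tau_1,\ 1+\tau_2,\ 1+\tau_3,\ 1+\tau_4\end{matrix};\,1\right) =\frac{\pi Q}{4\,(ab^3-a^3b+abc^2)}\cdot\frac{\sin\!\big(\frac{a\pi}{b}\big)}{\cos\!\big(\frac{c\pi}{b}\big)+\cos\!\big(\frac{a\pi}{b}\big)}. $$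
   Context: $\mathbb{Z}_0^-=\{0,-1,-2,\dots\}$. The Pochhammer symbol is $(\lambda)_0=1$, $(\lambda)_n=\lambda(\lambda+1)\cdots(\lambda+n-1)$ for $n\ge1$. The generalized hypergeometric series is ${}_pF_q\!\left(\begin{matrix}\alpha_1,\dots,\alpha_p\\ \beta_1,\dots,\beta_q\end{matrix};z\right)=\sum_{n=0}^\infty\frac{(\alpha_1)_n\cdots(\alpha_p)_n}{(\beta_1)_n\cdots(\beta_q)_n}\frac{z^n}{n!}$ (with no $\beta_j\in\mathbb{Z}_0^-$). *)

theory Defs
  imports "HOL-Analysis.Analysis"
begin

definition hyp_term :: "complex list \<Rightarrow> complex list \<Rightarrow> complex \<Rightarrow> nat \<Rightarrow> complex" where
  "hyp_term as bs z n =
     (\<Prod>\<alpha>\<leftarrow>as. pochhammer \<alpha> n) / (\<Prod>\<beta>\<leftarrow>bs. pochhammer \<beta> n) * z ^ n / of_nat (fact n)"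

definition hypergeom :: "complex list \<Rightarrow> complex list \<Rightarrow> complex \<Rightarrow> complex" where
  "hypergeom as bs z = (\<Sum>n. hyp_term as bs z n)"

end

theory Submission
  imports Defs
begin

text \<open>Put \<open>u = (a + c)/(2b)\<close>, \<open>v = (a - c)/(2b)\<close>, so that \<open>\<mu>\<^sup>2 = u v\<close>. Every Pochhammer quotient in
  the \<open>n\<close>-th term telescopes to a linear factor, and since \<open>\<mu>\<^sup>2 = u v\<close> the resulting rational function
  of \<open>y = n + 1/2\<close> is a constant times \<open>(1/(y - u) - 1/(y + u)) + (1/(y - v) - 1/(y + v))\<close>.
  By the series for the digamma function and its reflection formula each bracket sums to
  \<open>\<psi>(1/2 + u) - \<psi>(1/2 - u) = \<pi> tan (\<pi> u)\<close>, and \<open>tan (\<pi> u) + tan (\<pi> v)\<close> is the stated quotient of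
  sines and cosines.\<close>

lemma pochhammer_one_plus:
  fixes x :: "'a :: field"
  assumes "x \<noteq> 0"
  shows "pochhammer (1 + x) n = pochhammer x n * ((x + of_nat n) / x)"
proof -
  have "x * pochhammer (x + 1) n = (x + of_nat n) * pochhammer x n"
    using pochhammer_rec[of x n] pochhammer_rec'[of x n] by simp
  with assms show ?thesis
    by (simp add: field_simps)
qed

lemma prod_list_pochhammer_one_plus:
  fixes xs :: "'a :: field list"
  assumes "0 \<notin> set xs"
  shows "(\<Prod>x\<leftarrow>xs. pochhammer (1 + x) n) = (\<Prod>x\<leftarrow>xs. pochhammer x n) * (\<Prod>x\<leftarrow>xs. (x + of_nat n) / x)"
  using assms by (induction xs) (auto simp: pochhammer_one_plus)

lemma hyp_term_unit_shifts:
  assumes "\<forall>x \<in> set ps \<union> set qs. x \<notin> \<int>\<^sub>\<le>\<^sub>0"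
  shows "hyp_term (1 # map ((+) 1) ps @ qs) (ps @ map ((+) 1) qs) 1 n
           = (\<Prod>p\<leftarrow>ps. (p + of_nat n) / p) / (\<Prod>q\<leftarrow>qs. (q + of_nat n) / q)"
proof -
  have "0 \<notin> set ps" "0 \<notin> set qs" using assms by auto
  moreover have "(\<Prod>x\<leftarrow>xs. pochhammer x n) \<noteq> 0" if "set xs \<subseteq> set ps \<union> set qs" for xs
    using that assms pochhammer_eq_0_imp_nonpos_Int by (fastforce simp: prod_list_zero_iff)
  ultimately show ?thesis
    by (simp add: hyp_term_def pochhammer_fact[symmetric] o_def prod_list_pochhammer_one_plus)
qed

lemma partial_fractions_well_poised:
  fixes y u v :: "'a :: field_char_0"
  assumes "y - u \<noteq> 0" "y + u \<noteq> 0" "y - v \<noteq> 0" "y + v \<noteq> 0" "u + v \<noteq> 0"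
  shows "(y^2 - u * v) / ((y^2 - u^2) * (y^2 - v^2))
           = ((1 / (y - u) - 1 / (y + u)) + (1 / (y - v) - 1 / (y + v))) / (2 * (u + v))"
proof -
  have square_diff: "y^2 - w^2 = (y - w) * (y + w)" for w
    by (simp add: power2_eq_square algebra_simps)
  have diff: "1 / (y - w) - 1 / (y + w) = 2 * w / (y^2 - w^2)" if "y - w \<noteq> 0" "y + w \<noteq> 0" for w
    using that by (simp add: square_diff field_simps)
  have nz: "y^2 - u^2 \<noteq> 0" "y^2 - v^2 \<noteq> 0"
    using assms by (simp_all add: square_diff)
  have "(2 * u / (y^2 - u^2) + 2 * v / (y^2 - v^2)) / (2 * (u + v))
      = (2 * u * (y^2 - v^2) + 2 * v * (y^2 - u^2)) / ((y^2 - u^2) * (y^2 - v^2) * (2 * (u + v)))"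
    using nz by (simp add: field_simps)
  also have "2 * u * (y^2 - v^2) + 2 * v * (y^2 - u^2) = (y^2 - u * v) * (2 * (u + v))"
    by (simp add: algebra_simps power2_eq_square)
  also have "(y^2 - u * v) * (2 * (u + v)) / ((y^2 - u^2) * (y^2 - v^2) * (2 * (u + v)))
      = (y^2 - u * v) / ((y^2 - u^2) * (y^2 - v^2))"
    using assms(5) by (intro nonzero_mult_divide_mult_cancel_right) (simp del: distrib_left_numeral)
  finally show ?thesis
    using assms by (simp add: diff)
qed

lemma Digamma_reflection_complex:
  fixes z :: complex
  assumes "z \<notin> \<int>"
  shows "Digamma (1 - z) - Digamma z = of_real pi * cot (of_real pi * z)"
proof -
  have "1 - z \<notin> \<int>"
    using assms Ints_diff[of 1 "1 - z"] by auto
  then have z: "z \<notin> \<int>\<^sub>\<le>\<^sub>0" "1 - z \<notin> \<int>\<^sub>\<le>\<^sub>0"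
    using assms nonpos_Ints_subset_Ints by blast+
  have sin_nz: "sin (of_real pi * z) \<noteq> 0"
    using assms by (auto simp: sin_eq_0 mult.commute)
  have "((\<lambda>w. rGamma w * rGamma (1 - w)) has_field_derivative
          rGamma z * rGamma (1 - z) * (Digamma (1 - z) - Digamma z)) (at z)"
    by (rule derivative_eq_intros has_field_derivative_rGamma_no_nonpos_int z | simp)+
       (simp add: algebra_simps)
  moreover have "((\<lambda>w. rGamma w * rGamma (1 - w)) has_field_derivative cos (of_real pi * z)) (at z)"
    unfolding rGamma_reflection_complex by (auto intro!: derivative_eq_intros)
  ultimately have "sin (of_real pi * z) / of_real pi * (Digamma (1 - z) - Digamma z) = cos (of_real pi * z)"
    by (metis DERIV_unique rGamma_reflection_complex)
  with sin_nz show ?thesis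
    by (simp add: cot_def field_simps)
qed

lemma Digamma_one_minus_diff_sums:
  fixes z :: complex
  assumes "z \<notin> \<int>"
  shows "(\<lambda>n. 1 / (z + of_nat n) - 1 / (1 - z + of_nat n)) sums (Digamma (1 - z) - Digamma z)"
proof -
  have "(\<lambda>n. inverse (of_nat (Suc n)) - inverse (w + of_nat n)) sums (Digamma w + euler_mascheroni)"
    if "w \<noteq> 0" for w :: complex
    using summable_sums[OF summable_Digamma[OF that]] by (simp add: Digamma_def)
  moreover have "z \<noteq> 0" "1 - z \<noteq> 0"
    using assms by auto
  ultimately have "(\<lambda>n. (inverse (of_nat (Suc n)) - inverse (1 - z + of_nat n))
                 - (inverse (of_nat (Suc n)) - inverse (z + of_nat n)))
               sums ((Digamma (1 - z) + euler_mascheroni) - (Digamma z + euler_mascheroni))"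
    by (intro sums_diff)
  then show ?thesis
    by (simp add: divide_inverse)
qed

lemma sums_pi_tan:
  fixes u :: complex
  assumes "1/2 - u \<notin> \<int>"
  shows "(\<lambda>n. 1 / (1/2 - u + of_nat n) - 1 / (1/2 + u + of_nat n)) sums (of_real pi * tan (of_real pi * u))"
proof -
  have "cot (of_real pi * (1/2 - u)) = tan (of_real pi * u)"
    by (simp add: cot_def tan_def right_diff_distrib sin_diff cos_diff)
  then show ?thesis
    using Digamma_one_minus_diff_sums[OF assms] Digamma_reflection_complex[OF assms]
    by (simp add: algebra_simps)
qed

lemma tan_add_tan_eq:
  fixes x y :: complex
  assumes "cos x \<noteq> 0" "cos y \<noteq> 0"
  shows "tan x + tan y = 2 * sin (x + y) / (cos (x - y) + cos (x + y))"
  using add_tan_eq[OF assms] by (simp add: cos_add cos_diff)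

lemma half_minus_notin_Ints_if_not_odd:
  fixes w :: "'a :: field_char_0"
  assumes "\<forall>k::int. w \<noteq> of_int (2 * k + 1)"
  shows "1/2 - w/2 \<notin> \<int>"
proof
  assume "1/2 - w/2 \<in> \<int>"
  then obtain k where k: "1/2 - w/2 = of_int k"
    by (elim Ints_cases)
  have "w = 1 - 2 * (1/2 - w/2)"
    by simp
  then have "w = of_int (2 * (- k) + 1)"
    unfolding k by simp
  with assms show False
    by blast
qed

lemma well_poised_ratio_partial_fractions:
  fixes y u v m :: "'a :: field_char_0"
  assumes m: "m^2 = u * v" "1/2 - m \<noteq> 0" "1/2 + m \<noteq> 0"
    and uv: "u + v \<noteq> 0" "1/2 - u \<noteq> 0" "1/2 + u \<noteq> 0" "1/2 - v \<noteq> 0" "1/2 + v \<noteq> 0"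
    and y: "y - u \<noteq> 0" "y + u \<noteq> 0" "y - v \<noteq> 0" "y + v \<noteq> 0"
  shows "(y - m) / (1/2 - m) * ((y + m) / (1/2 + m))
           / ((y - u) / (1/2 - u) * ((y - v) / (1/2 - v) * ((y + u) / (1/2 + u) * ((y + v) / (1/2 + v)))))
         = (1/2 - u) * (1/2 - v) * (1/2 + u) * (1/2 + v) / (2 * (u + v) * (1/4 - m^2))
             * ((1 / (y - u) - 1 / (y + u)) + (1 / (y - v) - 1 / (y + v)))"
proof -
  have products: "(y - m) * (y + m) = y^2 - u * v" "(y - u) * (y + u) = y^2 - u^2"
      "(y - v) * (y + v) = y^2 - v^2" "(1/2 - m) * (1/2 + m) = 1/4 - m^2"
    by (simp_all add: m(1)[symmetric] algebra_simps power2_eq_square)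
  from m uv y have "(y - m) / (1/2 - m) * ((y + m) / (1/2 + m))
        / ((y - u) / (1/2 - u) * ((y - v) / (1/2 - v) * ((y + u) / (1/2 + u) * ((y + v) / (1/2 + v)))))
      = (1/2 - u) * (1/2 - v) * (1/2 + u) * (1/2 + v) / ((1/2 - m) * (1/2 + m))
        * ((y - m) * (y + m) / (((y - u) * (y + u)) * ((y - v) * (y + v))))"
    by (simp add: field_simps)
  also have "\<dots> = (1/2 - u) * (1/2 - v) * (1/2 + u) * (1/2 + v) / (1/4 - m^2)
        * ((y^2 - u * v) / ((y^2 - u^2) * (y^2 - v^2)))"
    by (simp only: products)
  also have "(y^2 - u * v) / ((y^2 - u^2) * (y^2 - v^2))
      = ((1 / (y - u) - 1 / (y + u)) + (1 / (y - v) - 1 / (y + v))) / (2 * (u + v))"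
    by (rule partial_fractions_well_poised[OF y uv(1)])
  finally show ?thesis
    by simp
qed

lemma hyp_term_well_poised_7F6:
  fixes u v m :: complex
  assumes m: "m^2 = u * v" "1/2 - m \<notin> \<int>\<^sub>\<le>\<^sub>0" "1/2 + m \<notin> \<int>\<^sub>\<le>\<^sub>0"
    and uv: "u + v \<noteq> 0" "1/2 - u \<notin> \<int>" "1/2 - v \<notin> \<int>"
  shows "hyp_term [1, 3/2 - m, 3/2 + m, 1/2 - u, 1/2 - v, 1/2 + u, 1/2 + v]
                  [1/2 - m, 1/2 + m, 1 + (1/2 - u), 1 + (1/2 - v), 1 + (1/2 + u), 1 + (1/2 + v)] 1 n
           = (1/2 - u) * (1/2 - v) * (1/2 + u) * (1/2 + v) / (2 * (u + v) * (1/4 - m^2))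
             * ((1 / (1/2 - u + of_nat n) - 1 / (1/2 + u + of_nat n))
                + (1 / (1/2 - v + of_nat n) - 1 / (1/2 + v + of_nat n)))"
proof -
  define y :: complex where "y = of_nat n + 1/2"
  have "1/2 + w \<notin> \<int>" if "1/2 - w \<notin> \<int>" for w :: complex
    using that Ints_diff[OF Ints_1, of "1/2 + w"] by (auto simp: algebra_simps)
  then have uv_Ints: "1/2 - u \<notin> \<int>\<^sub>\<le>\<^sub>0" "1/2 + u \<notin> \<int>\<^sub>\<le>\<^sub>0" "1/2 - v \<notin> \<int>\<^sub>\<le>\<^sub>0" "1/2 + v \<notin> \<int>\<^sub>\<le>\<^sub>0"
    using uv(2,3) nonpos_Ints_subset_Ints by blast+
  have "z + of_nat n \<noteq> 0" if "z \<notin> \<int>\<^sub>\<le>\<^sub>0" for z :: complex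
    using that plus_of_nat_eq_0_imp by blast
  moreover have "y - u = (1/2 - u) + of_nat n" "y + u = (1/2 + u) + of_nat n"
      "y - v = (1/2 - v) + of_nat n" "y + v = (1/2 + v) + of_nat n"
    by (simp_all add: y_def)
  ultimately have y: "y - u \<noteq> 0" "y + u \<noteq> 0" "y - v \<noteq> 0" "y + v \<noteq> 0"
    using uv_Ints by presburger+
  have "hyp_term (1 # map ((+) 1) [1/2 - m, 1/2 + m] @ [1/2 - u, 1/2 - v, 1/2 + u, 1/2 + v])
                 ([1/2 - m, 1/2 + m] @ map ((+) 1) [1/2 - u, 1/2 - v, 1/2 + u, 1/2 + v]) 1 n
      = (y - m) / (1/2 - m) * ((y + m) / (1/2 + m))
        / ((y - u) / (1/2 - u) * ((y - v) / (1/2 - v) * ((y + u) / (1/2 + u) * ((y + v) / (1/2 + v)))))"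
    using m uv_Ints by (subst hyp_term_unit_shifts) (auto simp: y_def algebra_simps)
  also have "\<dots> = (1/2 - u) * (1/2 - v) * (1/2 + u) * (1/2 + v) / (2 * (u + v) * (1/4 - m^2))
             * ((1 / (y - u) - 1 / (y + u)) + (1 / (y - v) - 1 / (y + v)))"
    using m(2,3) uv_Ints zero_in_nonpos_Ints[where 'a = complex]
    by (intro well_poised_ratio_partial_fractions m(1) uv(1) y) metis+
  finally show ?thesis
    by (simp add: y_def algebra_simps)
qed

lemma cos_pi_times_nonzero:
  fixes u :: complex
  assumes "1/2 - u \<notin> \<int>"
  shows "cos (of_real pi * u) \<noteq> 0"
proof
  assume "cos (of_real pi * u) = 0"
  then have "sin (of_real pi * (1/2 - u)) = 0"
    by (simp add: right_diff_distrib sin_diff)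
  then obtain n :: int where "of_real pi * (1/2 - u) = of_real pi * of_int n"
    by (auto simp: sin_eq_0 mult.commute)
  with assms show False
    by simp
qed

lemma hypergeom_well_poised_7F6_sums:
  fixes u v m :: complex
  assumes "m^2 = u * v" "1/2 - m \<notin> \<int>\<^sub>\<le>\<^sub>0" "1/2 + m \<notin> \<int>\<^sub>\<le>\<^sub>0"
    and "u + v \<noteq> 0" "1/2 - u \<notin> \<int>" "1/2 - v \<notin> \<int>"
  shows "hyp_term [1, 3/2 - m, 3/2 + m, 1/2 - u, 1/2 - v, 1/2 + u, 1/2 + v]
                  [1/2 - m, 1/2 + m, 1 + (1/2 - u), 1 + (1/2 - v), 1 + (1/2 + u), 1 + (1/2 + v)] 1
           sums (of_real pi * ((1/2 - u) * (1/2 - v) * (1/2 + u) * (1/2 + v) / ((u + v) * (1/4 - u * v)))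
                 * (sin (of_real pi * (u + v)) / (cos (of_real pi * (u - v)) + cos (of_real pi * (u + v)))))"
proof -
  have "hyp_term [1, 3/2 - m, 3/2 + m, 1/2 - u, 1/2 - v, 1/2 + u, 1/2 + v]
                  [1/2 - m, 1/2 + m, 1 + (1/2 - u), 1 + (1/2 - v), 1 + (1/2 + u), 1 + (1/2 + v)] 1
           sums ((1/2 - u) * (1/2 - v) * (1/2 + u) * (1/2 + v) / (2 * (u + v) * (1/4 - m^2))
                 * (of_real pi * tan (of_real pi * u) + of_real pi * tan (of_real pi * v)))"
    unfolding hyp_term_well_poised_7F6[OF assms]
    using assms(5,6) by (intro sums_mult sums_add sums_pi_tan)
  moreover have "tan (of_real pi * u) + tan (of_real pi * v)
      = 2 * sin (of_real pi * (u + v)) / (cos (of_real pi * (u - v)) + cos (of_real pi * (u + v)))"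
    using tan_add_tan_eq[OF cos_pi_times_nonzero[OF assms(5)] cos_pi_times_nonzero[OF assms(6)]]
    by (simp only: distrib_left right_diff_distrib)
  moreover have "Z / (2 * X) * (p * t + p * t') = p * (Z / X) * (S / D)" if "t + t' = 2 * S / D"
    for Z X p t t' S D :: complex
    using that by (simp add: mult_ac flip: distrib_left)
  ultimately show ?thesis
    unfolding assms(1) by (simp only: mult.assoc)
qed

lemma well_poised_7F6_constant:
  fixes a b c u v :: complex
  assumes "b \<noteq> 0" "u = (a + c) / (2 * b)" "v = (a - c) / (2 * b)"
  shows "(1/2 - u) * (1/2 - v) * (1/2 + u) * (1/2 + v) / ((u + v) * (1/4 - u * v))
           = (b - a - c) * (b + a + c) * (b - a + c) * (b + a - c) / (4 * (a * b ^ 3 - a ^ 3 * b + a * b * c ^ 2))"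
proof -
  have Z: "(1/2 - u) * (1/2 - v) * (1/2 + u) * (1/2 + v)
      = (b - a - c) * (b + a + c) * (b - a + c) * (b + a - c) / (16 * b^4)"
    using assms(1) unfolding assms(2,3) by (simp add: field_simps) (simp add: algebra_simps power4_eq_xxxx)
  have X: "(u + v) * (1/4 - u * v) = (a * b ^ 3 - a ^ 3 * b + a * b * c ^ 2) / (4 * b^4)"
    using assms(1) unfolding assms(2,3)
    by (simp add: field_simps) (simp add: algebra_simps power4_eq_xxxx power3_eq_cube power2_eq_square)
  have cancel: "P / (16 * B) / (K / (4 * B)) = P / (4 * K)" if "B \<noteq> 0" for P K B :: complex
    using that by (cases "K = 0") (simp_all add: field_simps)
  show ?thesis
    unfolding Z X by (rule cancel) (simp add: assms(1))
qed

theorem mainTheorem5: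
  fixes a b c s :: complex
  assumes "a \<noteq> 0"
    and "Re b > 0" and "Re (b + a + c) > 0" and "Re (b + a - c) > 0"
    and "Re (b - a + c) > 0" and "Re (b - a - c) > 0"
    and "\<forall>k::int. (a + c) / b \<noteq> of_int (2 * k + 1)"
    and "\<forall>k::int. (a - c) / b \<noteq> of_int (2 * k + 1)"
    and "s ^ 2 = a ^ 2 - c ^ 2"
    and "1/2 + s / (2 * b) \<notin> \<int>\<^sub>\<le>\<^sub>0"
    and "1/2 - s / (2 * b) \<notin> \<int>\<^sub>\<le>\<^sub>0"
    and "1 + (1/2 - (a + c) / (2 * b)) \<notin> \<int>\<^sub>\<le>\<^sub>0"
    and "1 + (1/2 - (a - c) / (2 * b)) \<notin> \<int>\<^sub>\<le>\<^sub>0"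
    and "1 + (1/2 + (a + c) / (2 * b)) \<notin> \<int>\<^sub>\<le>\<^sub>0"
    and "1 + (1/2 + (a - c) / (2 * b)) \<notin> \<int>\<^sub>\<le>\<^sub>0"
  shows
    "let \<mu> = s / (2 * b);
         \<tau>1 = 1/2 - (a + c) / (2 * b); \<tau>2 = 1/2 - (a - c) / (2 * b);
         \<tau>3 = 1/2 + (a + c) / (2 * b); \<tau>4 = 1/2 + (a - c) / (2 * b);
         Q = (b - a - c) * (b + a + c) * (b - a + c) * (b + a - c);
         as = [1, 3/2 - \<mu>, 3/2 + \<mu>, \<tau>1, \<tau>2, \<tau>3, \<tau>4];
         bs = [1/2 - \<mu>, 1/2 + \<mu>, 1 + \<tau>1, 1 + \<tau>2, 1 + \<tau>3, 1 + \<tau>4]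
     in summable (hyp_term as bs 1) \<and>
        hypergeom as bs 1 =
          of_real pi * Q / (4 * (a * b ^ 3 - a ^ 3 * b + a * b * c ^ 2)) *
          (sin (a * of_real pi / b) / (cos (c * of_real pi / b) + cos (a * of_real pi / b)))"
proof -
  \<comment> \<open>The terms are \<open>O(n\<^sup>-\<^sup>2)\<close>, so the real-part hypotheses are needed only for \<open>b \<noteq> 0\<close>;
    the conditions on \<open>1 + \<tau>\<^sub>j\<close> follow from the parity conditions.\<close>
  have b: "b \<noteq> 0"
    using assms(2) by auto
  define u where "u = (a + c) / (2 * b)"
  define v where "v = (a - c) / (2 * b)"
  define m where "m = s / (2 * b)"
  have u: "1/2 - u \<notin> \<int>" and v: "1/2 - v \<notin> \<int>"
    using half_minus_notin_Ints_if_not_odd[OF assms(7)] half_minus_notin_Ints_if_not_odd[OF assms(8)]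
    by (simp_all add: u_def v_def mult.commute)
  have "m^2 = (a^2 - c^2) / (4 * b^2)"
    by (simp add: m_def power_divide power_mult_distrib assms(9))
  also have "\<dots> = u * v"
    using b by (simp add: u_def v_def field_simps power2_eq_square)
  finally have m_sq: "m^2 = u * v" .
  have m_poles: "1/2 - m \<notin> \<int>\<^sub>\<le>\<^sub>0" "1/2 + m \<notin> \<int>\<^sub>\<le>\<^sub>0"
    using assms(10,11) by (simp_all add: m_def)
  have "u + v \<noteq> 0"
    using b assms(1) by (simp add: u_def v_def add_divide_distrib[symmetric])
  note sums = hypergeom_well_poised_7F6_sums[OF m_sq m_poles this u v]
  have "of_real pi * (u + v) = a * of_real pi / b" "of_real pi * (u - v) = c * of_real pi / b"
    using b by (simp_all add: u_def v_def field_simps)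
  with sums show ?thesis
    unfolding well_poised_7F6_constant[OF b u_def v_def] Let_def hypergeom_def
    unfolding m_def[symmetric] u_def[symmetric] v_def[symmetric]
    by (simp add: sums_summable sums_unique[symmetric])
qed

end
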